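(* Let $N\ge2$, $\lambda\in(0,1)$ and let $\varphi_1,\dots,\varphi_N\colon[0,1]\to[0,1]$ be bi-Lipschitz maps with Lipschitz constant at most $\lambda$; let $\Phi=\{\varphi_i\}_{i=1}^N$ and $U=\{(\mu_1,\dots,\mu_{N-1})\in\mathbb{R}^{N-1}:0<\mu_1<\cdots<\mu_{N-1}<1\}$. Then for Lebesgue almost every $\mu\in U$, the pair $(\Phi,\mu)$ has no singular connection.
   Context: For $\alpha=(i_0,\dots,i_{n-1})\in\{1,\dots,N\}^n$, $\varphi^\alpha=\varphi_{i_{n-1}}\circ\cdots\circ\varphi_{i_0}$. For $\mu\in U$, $(\Phi,\mu)$ has a singular connection if there are $n\ge1$, $\alpha\in\{1,\dots,N\}^n$ and $i,j\in\{1,\dots,N-1\}$ with $\varphi^\alpha(\mu_i)=\mu_j$. *)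

theory Defs
  imports "HOL-Analysis.Analysis"
begin

text \<open>The composition along a word alpha = [i_0, ..., i_(n-1)]:
  phi_{i_(n-1)} o ... o phi_{i_0} (phi_{i_0} applied first).\<close>
definition word_comp :: "(nat \<Rightarrow> real \<Rightarrow> real) \<Rightarrow> nat list \<Rightarrow> real \<Rightarrow> real" where
  "word_comp \<phi> \<alpha> = fold (\<lambda>i f. \<phi> i \<circ> f) \<alpha> id"

text \<open>The parameter set U, with mu represented as a function on the index set {1..N-1}.\<close>
definition param_set :: "nat \<Rightarrow> (nat \<Rightarrow> real) set" where
  "param_set N = {\<mu>. (\<forall>i\<in>{1..N-1}. 0 < \<mu> i \<and> \<mu> i < 1) \<and> (\<forall>i\<in>{1..<N-1}. \<mu> i < \<mu> (Suc i))}"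

definition singular_connection :: "nat \<Rightarrow> (nat \<Rightarrow> real \<Rightarrow> real) \<Rightarrow> (nat \<Rightarrow> real) \<Rightarrow> bool" where
  "singular_connection N \<phi> \<mu> \<longleftrightarrow>
     (\<exists>\<alpha>. \<alpha> \<noteq> [] \<and> set \<alpha> \<subseteq> {1..N} \<and>
        (\<exists>i\<in>{1..N-1}. \<exists>j\<in>{1..N-1}. word_comp \<phi> \<alpha> (\<mu> i) = \<mu> j))"

definition bi_lipschitz_on :: "real \<Rightarrow> real set \<Rightarrow> (real \<Rightarrow> real) \<Rightarrow> bool" where
  "bi_lipschitz_on L S f \<longleftrightarrow> L-lipschitz_on S f \<and>
     (\<exists>c>0. \<forall>x\<in>S. \<forall>y\<in>S. c * \<bar>x - y\<bar> \<le> \<bar>f x - f y\<bar>)"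

end

theory Submission
  imports Defs
begin

text \<open>There are only countably many words \<alpha> and index pairs (i, j), so it suffices to show that
  each equation phi^\<alpha>(mu_i) = mu_j holds only on a null set of parameters. By Fubini it is enough
  to check this on the lines parallel to the j-th axis. If i \<noteq> j, such a line meets the set
  in at most the single point mu_j = phi^\<alpha>(mu_i). If i = j, mu_i must be a fixed point of
  phi^\<alpha>, which is a contraction of [0,1] with constant lam^n < 1 and so has at most one.\<close>

lemma word_comp_snoc: "word_comp \<phi> (\<alpha> @ [a]) = \<phi> a \<circ> word_comp \<phi> \<alpha>"
  by (simp add: word_comp_def)

lemma word_comp_image_subset:
  assumes "\<And>i. i \<in> I \<Longrightarrow> \<phi> i ` S \<subseteq> S" and "set \<alpha> \<subseteq> I"
  shows "word_comp \<phi> \<alpha> ` S \<subseteq> S"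
  using assms(2)
proof (induction \<alpha> rule: rev_induct)
  case Nil
  then show ?case by (simp add: word_comp_def)
next
  case (snoc a \<alpha>)
  then show ?case using assms(1)[of a] by (fastforce simp: word_comp_snoc)
qed

lemma word_comp_lipschitz_on:
  assumes "\<And>i. i \<in> I \<Longrightarrow> \<phi> i ` S \<subseteq> S" and "\<And>i. i \<in> I \<Longrightarrow> L-lipschitz_on S (\<phi> i)"
    and "set \<alpha> \<subseteq> I"
  shows "(L ^ length \<alpha>)-lipschitz_on S (word_comp \<phi> \<alpha>)"
  using assms(3)
proof (induction \<alpha> rule: rev_induct)
  case Nil
  then show ?case using lipschitz_on_id by (simp add: word_comp_def id_def)
next
  case (snoc a \<alpha>)
  have "L-lipschitz_on (word_comp \<phi> \<alpha> ` S) (\<phi> a)"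
    using assms(2)[of a] word_comp_image_subset[of I \<phi> S \<alpha>] assms(1) snoc.prems
    by (auto intro: lipschitz_on_subset)
  with snoc have "(L * L ^ length \<alpha>)-lipschitz_on S (\<phi> a \<circ> word_comp \<phi> \<alpha>)"
    by (intro lipschitz_on_compose) auto
  then show ?case by (simp add: word_comp_snoc)
qed

lemma lipschitz_on_fixpoint_unique:
  assumes "L-lipschitz_on S f" "L < 1" "x \<in> S" "y \<in> S" "f x = x" "f y = y"
  shows "x = y"
proof -
  have "dist x y \<le> L * dist x y"
    using lipschitz_onD[OF assms(1,3,4)] assms(5,6) by simp
  then show ?thesis
    using assms(2) by (metis mult_le_cancel_right1 not_le zero_less_dist_iff)
qed

lemma (in product_sigma_finite) AE_PiM_by_sections:
  assumes "finite I" "j \<in> I" and [measurable]: "Measurable.pred (PiM I M) P"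
    and sections: "\<And>x. AE y in M j. P (x(j := y))"
  shows "AE x in PiM I M. P x"
proof -
  let ?N = "{x \<in> space (PiM I M). \<not> P x}"
  have I: "insert j (I - {j}) = I"
    using assms(2) by auto
  have "emeasure (PiM I M) ?N = (\<integral>\<^sup>+ x. indicator ?N x \<partial>PiM I M)"
    by simp
  also have "\<dots> = (\<integral>\<^sup>+ x. \<integral>\<^sup>+ y. indicator ?N (x(j := y)) \<partial>M j \<partial>PiM (I - {j}) M)"
    using product_nn_integral_insert[of "I - {j}" j "indicator ?N"] assms(1) I by simp
  also have "\<dots> = 0"
  proof -
    have "(\<integral>\<^sup>+ y. indicator ?N (x(j := y)) \<partial>M j) = (\<integral>\<^sup>+ y. 0 \<partial>M j)" for x
      by (intro nn_integral_cong_AE eventually_mono[OF sections[of x]]) simp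
    then show ?thesis by simp
  qed
  finally show ?thesis
    by (intro AE_I[of _ _ ?N]) auto
qed

lemma pred_PiM_off_graph:
  fixes g :: "real \<Rightarrow> real"
  assumes "closed S" "continuous_on S g" "i \<in> I" "j \<in> I"
  shows "Measurable.pred (PiM I (\<lambda>_. lborel)) (\<lambda>\<mu>. \<mu> i \<in> S \<longrightarrow> g (\<mu> i) \<noteq> \<mu> j)"
proof -
  define h where "h x = (if x \<in> S then g x else 0)" for x
  have [measurable]: "S \<in> sets borel"
    using assms(1) by (simp add: borel_closed)
  have [measurable]: "h \<in> borel_measurable borel"
    unfolding h_def using assms(2) by (intro borel_measurable_continuous_on_if) auto
  have [measurable]: "(\<lambda>\<mu>. \<mu> k) \<in> borel_measurable (PiM I (\<lambda>_. lborel))" if "k \<in> I" for k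
    using measurable_component_singleton[OF that, of "\<lambda>_. lborel"] by (simp add: measurable_lborel2)
  have [measurable]: "Measurable.pred (PiM I (\<lambda>_. lborel)) (\<lambda>\<mu>. h (\<mu> i) = \<mu> j)"
    unfolding pred_def using assms(3,4) by measurable
  have "Measurable.pred (PiM I (\<lambda>_. lborel)) (\<lambda>\<mu>. \<mu> i \<in> S \<longrightarrow> h (\<mu> i) \<noteq> \<mu> j)"
    using assms(3,4) by measurable
  then show ?thesis
    by (simp add: h_def cong: imp_cong)
qed

lemma AE_PiM_off_contraction_graph:
  fixes g :: "real \<Rightarrow> real"
  assumes "finite I" "i \<in> I" "j \<in> I" "closed S" "L-lipschitz_on S g" "L < 1"
  shows "AE \<mu> in PiM I (\<lambda>_. lborel). \<mu> i \<in> S \<longrightarrow> g (\<mu> i) \<noteq> \<mu> j"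
proof -
  interpret product_sigma_finite "\<lambda>_. lborel :: real measure"
    by standard
  show ?thesis
  proof (rule AE_PiM_by_sections[OF assms(1,3)])
    show "Measurable.pred (PiM I (\<lambda>_. lborel)) (\<lambda>\<mu>. \<mu> i \<in> S \<longrightarrow> g (\<mu> i) \<noteq> \<mu> j)"
      using assms(2-5) lipschitz_on_continuous_on by (blast intro: pred_PiM_off_graph)
  next
    fix x
    show "AE y in lborel. (x(j := y)) i \<in> S \<longrightarrow> g ((x(j := y)) i) \<noteq> (x(j := y)) j"
    proof (cases "i = j")
      case True
      show ?thesis
      proof (cases "\<exists>a\<in>S. g a = a")
        case True
        then obtain a where "a \<in> S" "g a = a" by blast
        with \<open>i = j\<close> show ?thesis
          using lipschitz_on_fixpoint_unique[OF assms(5,6)]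
          by (auto intro: eventually_mono[OF AE_lborel_singleton[of a]])
      qed (use \<open>i = j\<close> in auto)
    next
      case False
      then show ?thesis
        by (auto intro: eventually_mono[OF AE_lborel_singleton[of "g (x i)"]])
    qed
  qed
qed

theorem lemma4p3:
  fixes N :: nat and lam :: real and \<phi> :: "nat \<Rightarrow> real \<Rightarrow> real"
  assumes "N \<ge> 2" and "0 < lam" and "lam < 1"
    and "\<And>i. i \<in> {1..N} \<Longrightarrow> \<phi> i ` {0..1} \<subseteq> {0..1}"
    and "\<And>i. i \<in> {1..N} \<Longrightarrow> bi_lipschitz_on lam {0..1} (\<phi> i)"
  shows "AE \<mu> in PiM {1..N-1} (\<lambda>_. lborel).
           \<mu> \<in> param_set N \<longrightarrow> \<not> singular_connection N \<phi> \<mu>"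
proof -
  define W where "W = {\<alpha>::nat list. \<alpha> \<noteq> [] \<and> set \<alpha> \<subseteq> {1..N}}"
  have "countable W"
    by (rule countable_subset[of _ UNIV]) auto
  have contraction: "(lam ^ length \<alpha>)-lipschitz_on {0..1} (word_comp \<phi> \<alpha>)" "lam ^ length \<alpha> < 1"
    if "\<alpha> \<in> W" for \<alpha>
  proof -
    show "(lam ^ length \<alpha>)-lipschitz_on {0..1} (word_comp \<phi> \<alpha>)"
      using that assms(4,5) by (intro word_comp_lipschitz_on[of "{1..N}"]) (auto simp: W_def bi_lipschitz_on_def)
    show "lam ^ length \<alpha> < 1"
      using that assms(2,3) by (auto simp: W_def power_less_one_iff)
  qed
  have "AE \<mu> in PiM {1..N-1} (\<lambda>_. lborel). \<forall>\<alpha>\<in>W. \<forall>i\<in>{1..N-1}. \<forall>j\<in>{1..N-1}.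
          \<mu> i \<in> {0..1} \<longrightarrow> word_comp \<phi> \<alpha> (\<mu> i) \<noteq> \<mu> j"
    using contraction
    by (intro AE_ball_countable'[OF _ \<open>countable W\<close>] AE_ball_countable'[OF _ countable_finite]
        AE_PiM_off_contraction_graph) auto
  then show ?thesis
    by (rule eventually_mono) (auto simp: param_set_def singular_connection_def W_def)
qed

end
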